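(* Let $\alpha$ be a complex number with $0<|\alpha|<1$ and let $\alpha_n=\alpha$ for all $n\ge0$ (Geronimus polynomials). Then, for every nonnegative integer $m$, as formal power series in $z$, \[ \sum_{n\ge0}\mu_{n,m}z^n=\frac{2|\alpha|^2(2z)^m}{\left(2|\alpha|^2+\alpha-\alpha z-\alpha\sqrt{1-2z+4|\alpha|^2z+z^2}\right)\left(1+z+\sqrt{1-2z+4|\alpha|^2z+z^2}\right)^m}, \] where the square root is the formal power series with constant term $1$.
   Context: For a polynomial $f(z)=\sum_{k=0}^n a_kz^k$ of degree $n$, write $\overline{f}(z)=\sum_k\overline{a_k}z^k$ and $f^*(z)=z^n\overline{f}(1/z)$. Given $(\alpha_n)$ with $|\alpha_n|<1$, define monic $\Phi_n$ by $\Phi_0=1$, $\Phi_{n+1}(z)=z\Phi_n(z)-\overline{\alpha_n}\Phi_n^*(z)$. Let $\mathcal{L}$ be the unique linear functional on Laurent polynomials with $\mathcal{L}(1)=1$ and $\mathcal{L}(\Phi_m(z)\overline{\Phi_n}(1/z))=0$ for $m\neq n$; set $\langle f,g\rangle=\mathcal{L}(f(z)\overline{g}(1/z))$ and $\mu_{n,m}=\langle\Phi_m(z),z^n\rangle/\langle\Phi_m,\Phi_m\rangle$. *)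

theory Defs
  imports Complex_Main "HOL-Computational_Algebra.Polynomial" "HOL-Computational_Algebra.Formal_Power_Series"
begin

text \<open>Reversed conjugate polynomial: f*(z) = z^n conj-f(1/z), n = degree f.\<close>
definition poly_star :: "complex poly \<Rightarrow> complex poly" where
  "poly_star f = (\<Sum>k\<le>degree f. monom (cnj (coeff f (degree f - k))) k)"

fun Phi :: "(nat \<Rightarrow> complex) \<Rightarrow> nat \<Rightarrow> complex poly" where
  "Phi a 0 = 1"
| "Phi a (Suc n) = [:0, 1:] * Phi a n - smult (cnj (a n)) (poly_star (Phi a n))"

text \<open>A linear functional L on Laurent polynomials is given by its moments c k = L(z^k), k \<in> \<int>.
  The form <f,g> = L(f(z) conj-g(1/z)) in terms of the moments.\<close>
definition ipL :: "(int \<Rightarrow> complex) \<Rightarrow> complex poly \<Rightarrow> complex poly \<Rightarrow> complex" where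
  "ipL c f g = (\<Sum>j\<le>degree f. \<Sum>k\<le>degree g. coeff f j * cnj (coeff g k) * c (int j - int k))"

definition moments :: "(nat \<Rightarrow> complex) \<Rightarrow> int \<Rightarrow> complex" where
  "moments a = (THE c. c 0 = 1 \<and> (\<forall>m n. m \<noteq> n \<longrightarrow> ipL c (Phi a m) (Phi a n) = 0))"

definition ip :: "(nat \<Rightarrow> complex) \<Rightarrow> complex poly \<Rightarrow> complex poly \<Rightarrow> complex" where
  "ip a f g = ipL (moments a) f g"

definition mu :: "(nat \<Rightarrow> complex) \<Rightarrow> nat \<Rightarrow> nat \<Rightarrow> complex" where
  "mu a n m = ip a (Phi a m) (monom 1 n) / ip a (Phi a m) (Phi a m)"

definition fps_sqrt1 :: "complex fps \<Rightarrow> complex fps" where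
  "fps_sqrt1 Q = (THE S. fps_nth S 0 = 1 \<and> S ^ 2 = Q)"

end

theory Submission
  imports Defs
begin

text \<open>
  The functional is determined by its moments \<open>c\<^sub>k = L(z^k)\<close>, which orthogonality forces
  recursively. Put \<open>G\<^sub>m = \<Sum>\<^sub>n \<langle>\<Phi>\<^sub>m, z^n\<rangle> z^n\<close> and \<open>H\<^sub>m = \<Sum>\<^sub>n \<langle>\<Phi>\<^sub>m\<^sup>*, z^n\<rangle> z^n\<close>. The Szego recursion
  turns into a coupled linear recursion for \<open>(G\<^sub>m, H\<^sub>m)\<close> whose inhomogeneous terms involve
  \<open>N\<^sub>m = \<parallel>\<Phi>\<^sub>m\<parallel>\<^sup>2 = \<Prod>k<m. (1 - |\<alpha>\<^sub>k|\<^sup>2)\<close>. Orthogonality gives \<open>G\<^sub>m = O(z^m)\<close>, and together with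
  \<open>G\<^sub>0 = H\<^sub>0\<close> this pins down the solution uniquely when all \<open>\<alpha>\<^sub>k \<noteq> 0\<close>. For constant \<open>\<alpha>\<close> the
  ansatz \<open>G\<^sub>m = N\<^sub>m g l^m\<close>, \<open>H\<^sub>m = N\<^sub>m (1 + (g - 1) l^m)\<close> is a solution as soon as \<open>g\<close> and \<open>l\<close>
  satisfy two algebraic equations, which \<open>g = 2|\<alpha>|\<^sup>2 / D\<close> and \<open>l = 2z / (1 + z + S)\<close> do since
  \<open>S\<^sup>2 = 1 - 2z + 4|\<alpha>|\<^sup>2 z + z\<^sup>2\<close>. Finally \<open>\<Sum>\<^sub>n \<mu>\<^sub>n\<^sub>,\<^sub>m z^n = G\<^sub>m / N\<^sub>m\<close>.
\<close>

unbundle fps_syntax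

section \<open>Szego polynomials\<close>

lemma coeff_poly_star:
  "coeff (poly_star f) i = (if i \<le> degree f then cnj (coeff f (degree f - i)) else 0)"
  unfolding poly_star_def by (simp add: coeff_sum coeff_monom)

lemma degree_poly_star_le: "degree (poly_star f) \<le> degree f"
  by (rule degree_le) (simp add: coeff_poly_star)

lemma poly_star_1 [simp]: "poly_star 1 = 1"
  by (simp add: poly_star_def)

declare Phi.simps(2) [simp del]

lemma coeff_Phi_Suc:
  "coeff (Phi a (Suc n)) i =
     (if i = 0 then 0 else coeff (Phi a n) (i - 1)) - cnj (a n) * coeff (poly_star (Phi a n)) i"
  by (cases i) (simp_all add: Phi.simps(2) coeff_pCons)

lemma monic_Phi: "degree (Phi a n) = n \<and> coeff (Phi a n) n = 1"
proof (induction n)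
  case 0
  then show ?case by simp
next
  case (Suc n)
  have top: "coeff (Phi a (Suc n)) (Suc n) = 1"
    using Suc by (simp add: coeff_Phi_Suc coeff_poly_star)
  have "degree (Phi a (Suc n)) \<le> Suc n"
    by (rule degree_le) (use Suc in \<open>auto simp: coeff_Phi_Suc coeff_poly_star coeff_eq_0\<close>)
  moreover have "Suc n \<le> degree (Phi a (Suc n))"
    using top by (intro le_degree) simp
  ultimately show ?case
    using top by simp
qed

lemma degree_Phi [simp]: "degree (Phi a n) = n"
  using monic_Phi by blast

lemma coeff_Phi_degree [simp]: "coeff (Phi a n) n = 1"
  using monic_Phi by blast

section \<open>The moment functional\<close>

text \<open>With moments \<open>c k = L(z^k)\<close> this is \<open>L(f(z) z^-k)\<close>, i.e. \<open>\<langle>f, z^k\<rangle>\<close> for \<open>k \<ge> 0\<close>.\<close>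
definition moment_pairing :: "(int \<Rightarrow> complex) \<Rightarrow> complex poly \<Rightarrow> int \<Rightarrow> complex" where
  "moment_pairing c f k = (\<Sum>j\<le>degree f. coeff f j * c (int j - k))"

lemma moment_pairing_atMost:
  assumes "degree f \<le> M"
  shows "moment_pairing c f k = (\<Sum>j\<le>M. coeff f j * c (int j - k))"
  unfolding moment_pairing_def
  by (rule sum.mono_neutral_left) (use assms in \<open>auto simp: coeff_eq_0\<close>)

lemma moment_pairing_diff_smult:
  "moment_pairing c (f - smult b g) k = moment_pairing c f k - b * moment_pairing c g k"
proof -
  let ?M = "max (degree f) (degree g)"
  have "degree (f - smult b g) \<le> ?M"
    by (metis degree_diff_le degree_smult_le max.cobounded1 max.cobounded2 order.trans)
  then have "moment_pairing c (f - smult b g) k = (\<Sum>j\<le>?M. coeff (f - smult b g) j * c (int j - k))"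
    by (rule moment_pairing_atMost)
  also have "\<dots> = (\<Sum>j\<le>?M. coeff f j * c (int j - k)) - b * (\<Sum>j\<le>?M. coeff g j * c (int j - k))"
    by (simp add: algebra_simps sum_subtractf sum_distrib_left)
  also have "\<dots> = moment_pairing c f k - b * moment_pairing c g k"
    by (simp add: moment_pairing_atMost[of f ?M] moment_pairing_atMost[of g ?M])
  finally show ?thesis .
qed

lemma moment_pairing_pCons_0: "moment_pairing c (pCons 0 f) k = moment_pairing c f (k - 1)"
proof (cases "f = 0")
  case True
  then show ?thesis by (simp add: moment_pairing_def)
next
  case False
  then have "moment_pairing c (pCons 0 f) k = (\<Sum>j\<le>Suc (degree f). coeff (pCons 0 f) j * c (int j - k))"
    by (simp add: moment_pairing_def)
  also have "\<dots> = (\<Sum>j\<le>degree f. coeff f j * c (int j - (k - 1)))"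
    by (subst sum.atMost_Suc_shift) (simp add: algebra_simps)
  finally show ?thesis by (simp add: moment_pairing_def)
qed

lemma moment_pairing_Phi_Suc:
  "moment_pairing c (Phi a (Suc n)) k =
     moment_pairing c (Phi a n) (k - 1) - cnj (a n) * moment_pairing c (poly_star (Phi a n)) k"
  by (simp add: Phi.simps(2) moment_pairing_diff_smult moment_pairing_pCons_0)

lemma moment_pairing_Phi:
  "moment_pairing c (Phi a n) k = c (int n - k) + (\<Sum>j<n. coeff (Phi a n) j * c (int j - k))"
  by (simp add: moment_pairing_def lessThan_Suc_atMost[symmetric] del: lessThan_Suc_atMost)

definition hermitian :: "(int \<Rightarrow> complex) \<Rightarrow> bool" where
  "hermitian c \<longleftrightarrow> (\<forall>k. c (- k) = cnj (c k))"

lemma moment_pairing_poly_star: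
  assumes "hermitian c"
  shows "moment_pairing c (poly_star f) k = cnj (moment_pairing c f (int (degree f) - k))"
proof -
  let ?d = "degree f"
  have "moment_pairing c (poly_star f) k = (\<Sum>i\<le>?d. cnj (coeff f (?d - i)) * c (int i - k))"
    by (simp add: moment_pairing_atMost[OF degree_poly_star_le] coeff_poly_star)
  also have "\<dots> = (\<Sum>j\<le>?d. cnj (coeff f j) * c (int ?d - int j - k))"
    by (rule sum.reindex_bij_witness[of _ "\<lambda>j. ?d - j" "\<lambda>i. ?d - i"]) (auto simp: of_nat_diff)
  also have "\<dots> = (\<Sum>j\<le>?d. cnj (coeff f j * c (int j - (int ?d - k))))"
    using assms unfolding hermitian_def
    by (intro sum.cong refl) (metis minus_diff_eq complex_cnj_mult diff_diff_eq2 diff_diff_eq)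
  finally show ?thesis
    by (simp add: moment_pairing_def)
qed

lemma ipL_eq_moment_pairing: "ipL c f g = (\<Sum>k\<le>degree g. cnj (coeff g k) * moment_pairing c f (int k))"
  unfolding ipL_def moment_pairing_def
  by (subst sum.swap) (simp add: sum_distrib_left algebra_simps)

lemma ipL_monom_1: "ipL c f (monom 1 n) = moment_pairing c f (int n)"
  by (simp add: ipL_eq_moment_pairing degree_monom_eq coeff_monom
      lessThan_Suc_atMost[symmetric] del: lessThan_Suc_atMost)

lemma ipL_hermitian:
  assumes "hermitian c"
  shows "ipL c f g = cnj (ipL c g f)"
proof -
  have "cnj (ipL c g f) = (\<Sum>j\<le>degree g. \<Sum>k\<le>degree f. cnj (coeff g j) * coeff f k * c (int k - int j))"
    unfolding ipL_def cnj_sum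
  proof (intro sum.cong refl)
    fix j k
    have "cnj (c (int j - int k)) = c (int k - int j)"
      using assms unfolding hermitian_def by (metis minus_diff_eq)
    then show "cnj (coeff g j * cnj (coeff f k) * c (int j - int k)) = cnj (coeff g j) * coeff f k * c (int k - int j)"
      by simp
  qed
  also have "\<dots> = ipL c f g"
    unfolding ipL_def by (subst sum.swap) (simp add: algebra_simps)
  finally show ?thesis by simp
qed

text \<open>\<open>c n\<close> is forced by \<open>\<langle>\<Phi>\<^sub>n, 1\<rangle> = 0\<close>, and \<open>c (-k) = cnj (c k)\<close>.\<close>
function szego_moment :: "(nat \<Rightarrow> complex) \<Rightarrow> nat \<Rightarrow> complex" where
  "szego_moment a n = (if n = 0 then 1 else - (\<Sum>j<n. coeff (Phi a n) j * szego_moment a j))"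
  by auto
termination by (relation "measure snd") auto

declare szego_moment.simps [simp del]

definition szego_moments :: "(nat \<Rightarrow> complex) \<Rightarrow> int \<Rightarrow> complex" where
  "szego_moments a k = (if 0 \<le> k then szego_moment a (nat k) else cnj (szego_moment a (nat (- k))))"

lemma szego_moments_0 [simp]: "szego_moments a 0 = 1"
  by (simp add: szego_moments_def szego_moment.simps)

lemma hermitian_szego_moments: "hermitian (szego_moments a)"
  unfolding hermitian_def szego_moments_def by (auto simp: szego_moment.simps[of a 0])

text \<open>The case \<open>k = 0\<close> is the defining recursion; for \<open>k > 0\<close> the Szego recursion reduces
  \<open>\<langle>\<Phi>\<^sub>n\<^sub>+\<^sub>1, z^k\<rangle>\<close> to \<open>\<langle>\<Phi>\<^sub>n, z^k-1\<rangle>\<close> and \<open>conj \<langle>\<Phi>\<^sub>n, z^n-k\<rangle>\<close>.\<close>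
lemma moment_pairing_Phi_eq_0:
  assumes "0 \<le> k" "k < int n"
  shows "moment_pairing (szego_moments a) (Phi a n) k = 0"
  using assms
proof (induction n arbitrary: k)
  case 0
  then show ?case by simp
next
  case (Suc n)
  let ?c = "szego_moments a"
  show ?case
  proof (cases "k = 0")
    case True
    have "moment_pairing ?c (Phi a (Suc n)) 0 =
        szego_moment a (Suc n) + (\<Sum>j<Suc n. coeff (Phi a (Suc n)) j * szego_moment a j)"
      by (simp add: moment_pairing_Phi[of _ a "Suc n"] szego_moments_def) (simp add: nat_add_distrib)
    also have "\<dots> = 0"
      by (subst szego_moment.simps) simp
    finally show ?thesis
      using True by simp
  next
    case False
    have "moment_pairing ?c (Phi a (Suc n)) k =
        moment_pairing ?c (Phi a n) (k - 1) - cnj (a n) * cnj (moment_pairing ?c (Phi a n) (int n - k))"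
      by (simp add: moment_pairing_Phi_Suc moment_pairing_poly_star[OF hermitian_szego_moments])
    also have "\<dots> = 0"
      using Suc False by simp
    finally show ?thesis .
  qed
qed

lemma ipL_szego_moments_Phi_lower:
  assumes "n < m"
  shows "ipL (szego_moments a) (Phi a m) (Phi a n) = 0"
  unfolding ipL_eq_moment_pairing using assms by (auto intro!: sum.neutral moment_pairing_Phi_eq_0)

definition orthogonalizing :: "(nat \<Rightarrow> complex) \<Rightarrow> (int \<Rightarrow> complex) \<Rightarrow> bool" where
  "orthogonalizing a c \<longleftrightarrow> c 0 = 1 \<and> (\<forall>m n. m \<noteq> n \<longrightarrow> ipL c (Phi a m) (Phi a n) = 0)"

lemma orthogonalizing_szego_moments: "orthogonalizing a (szego_moments a)"
  unfolding orthogonalizing_def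
proof (intro conjI allI impI)
  fix m n :: nat
  assume "m \<noteq> n"
  then consider "n < m" | "m < n" by linarith
  then show "ipL (szego_moments a) (Phi a m) (Phi a n) = 0"
  proof cases
    case 1
    then show ?thesis by (rule ipL_szego_moments_Phi_lower)
  next
    case 2
    then show ?thesis
      using ipL_hermitian[OF hermitian_szego_moments, of a "Phi a m" "Phi a n"]
        ipL_szego_moments_Phi_lower[OF 2] by simp
  qed
qed simp

lemma orthogonalizing_moment_pos:
  assumes "orthogonalizing a c" "0 < n"
  shows "c (int n) = - (\<Sum>j<n. coeff (Phi a n) j * c (int j))"
proof -
  have "ipL c (Phi a n) (Phi a 0) = 0"
    using assms unfolding orthogonalizing_def by (metis less_not_refl)
  then have "c (int n) + (\<Sum>j<n. coeff (Phi a n) j * c (int j)) = 0"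
    by (simp add: ipL_eq_moment_pairing moment_pairing_Phi)
  then show ?thesis
    by (simp only: eq_neg_iff_add_eq_0)
qed

lemma orthogonalizing_moment_neg:
  assumes "orthogonalizing a c" "0 < n"
  shows "c (- int n) = - (\<Sum>j<n. cnj (coeff (Phi a n) j) * c (- int j))"
proof -
  have "ipL c (Phi a 0) (Phi a n) = 0"
    using assms unfolding orthogonalizing_def by (metis less_not_refl)
  then have "c (- int n) + (\<Sum>j<n. cnj (coeff (Phi a n) j) * c (- int j)) = 0"
    by (simp add: ipL_def lessThan_Suc_atMost[symmetric] add.commute del: lessThan_Suc_atMost)
  then show ?thesis
    by (simp only: eq_neg_iff_add_eq_0)
qed

lemma orthogonalizing_unique:
  assumes c: "orthogonalizing a c" and d: "orthogonalizing a d"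
  shows "c = d"
proof -
  have eq: "c (int n) = d (int n) \<and> c (- int n) = d (- int n)" for n
  proof (induction n rule: less_induct)
    case (less n)
    show ?case
    proof (cases "n = 0")
      case True
      then show ?thesis
        using c d by (simp add: orthogonalizing_def)
    next
      case False
      then have "0 < n" by simp
      have "(\<Sum>j<n. coeff (Phi a n) j * c (int j)) = (\<Sum>j<n. coeff (Phi a n) j * d (int j))"
        "(\<Sum>j<n. cnj (coeff (Phi a n) j) * c (- int j)) = (\<Sum>j<n. cnj (coeff (Phi a n) j) * d (- int j))"
        using less.IH by (auto intro!: sum.cong)
      then show ?thesis
        using orthogonalizing_moment_pos[OF c \<open>0 < n\<close>] orthogonalizing_moment_pos[OF d \<open>0 < n\<close>]
          orthogonalizing_moment_neg[OF c \<open>0 < n\<close>] orthogonalizing_moment_neg[OF d \<open>0 < n\<close>]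
        by argo
    qed
  qed
  show ?thesis
  proof
    fix k :: int
    show "c k = d k"
      using eq[of "nat k"] eq[of "nat (- k)"] by (cases "0 \<le> k") simp_all
  qed
qed

lemma moments_eq_szego_moments: "moments a = szego_moments a"
proof -
  have "moments a = (THE c. orthogonalizing a c)"
    by (simp add: moments_def orthogonalizing_def)
  also have "\<dots> = szego_moments a"
    using orthogonalizing_szego_moments orthogonalizing_unique[OF _ orthogonalizing_szego_moments]
    by (rule the_equality)
  finally show ?thesis .
qed

section \<open>Norms and generating functions\<close>

definition Phi_sqnorm :: "(nat \<Rightarrow> complex) \<Rightarrow> nat \<Rightarrow> complex" where
  "Phi_sqnorm a n = moment_pairing (szego_moments a) (Phi a n) (int n)"

lemma ip_monom_1: "ip a f (monom 1 n) = moment_pairing (szego_moments a) f (int n)"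
  by (simp add: ip_def moments_eq_szego_moments ipL_monom_1)

lemma ip_Phi_self: "ip a (Phi a n) (Phi a n) = Phi_sqnorm a n"
proof -
  let ?c = "szego_moments a"
  have "ip a (Phi a n) (Phi a n) =
      (\<Sum>k<n. cnj (coeff (Phi a n) k) * moment_pairing ?c (Phi a n) (int k)) + Phi_sqnorm a n"
    by (simp add: ip_def moments_eq_szego_moments ipL_eq_moment_pairing Phi_sqnorm_def
        lessThan_Suc_atMost[symmetric] del: lessThan_Suc_atMost)
  also have "(\<Sum>k<n. cnj (coeff (Phi a n) k) * moment_pairing ?c (Phi a n) (int k)) = 0"
    by (auto intro!: sum.neutral moment_pairing_Phi_eq_0)
  finally show ?thesis by simp
qed

lemma mu_eq_moment_pairing:
  "mu a n m = moment_pairing (szego_moments a) (Phi a m) (int n) / Phi_sqnorm a m"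
  by (simp add: mu_def ip_monom_1 ip_Phi_self)

lemma moment_pairing_poly_star_Phi:
  "moment_pairing (szego_moments a) (poly_star (Phi a n)) k =
     cnj (moment_pairing (szego_moments a) (Phi a n) (int n - k))"
  using moment_pairing_poly_star[OF hermitian_szego_moments, of a "Phi a n" k] by simp

lemma moment_pairing_Phi_minus_1:
  "moment_pairing (szego_moments a) (Phi a n) (- 1) = cnj (a n) * cnj (Phi_sqnorm a n)"
proof -
  have "moment_pairing (szego_moments a) (Phi a (Suc n)) 0 = 0"
    by (rule moment_pairing_Phi_eq_0) auto
  then show ?thesis
    by (simp add: moment_pairing_Phi_Suc moment_pairing_poly_star_Phi Phi_sqnorm_def)
qed

lemma Phi_sqnorm_0 [simp]: "Phi_sqnorm a 0 = 1"
  by (simp add: Phi_sqnorm_def moment_pairing_def)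

lemma Phi_sqnorm_Suc: "Phi_sqnorm a (Suc n) = (1 - a n * cnj (a n)) * Phi_sqnorm a n"
  by (simp add: Phi_sqnorm_def moment_pairing_Phi_Suc moment_pairing_poly_star_Phi
      moment_pairing_Phi_minus_1[unfolded Phi_sqnorm_def] algebra_simps)

lemma cnj_Phi_sqnorm [simp]: "cnj (Phi_sqnorm a n) = Phi_sqnorm a n"
  by (induction n) (simp_all add: Phi_sqnorm_Suc)

definition Phi_gf :: "(nat \<Rightarrow> complex) \<Rightarrow> nat \<Rightarrow> complex fps" where
  "Phi_gf a m = Abs_fps (\<lambda>n. moment_pairing (szego_moments a) (Phi a m) (int n))"

definition Phi_star_gf :: "(nat \<Rightarrow> complex) \<Rightarrow> nat \<Rightarrow> complex fps" where
  "Phi_star_gf a m = Abs_fps (\<lambda>n. moment_pairing (szego_moments a) (poly_star (Phi a m)) (int n))"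

lemma mu_gf: "Abs_fps (\<lambda>n. mu a n m) = fps_const (inverse (Phi_sqnorm a m)) * Phi_gf a m"
  by (rule fps_ext) (simp add: mu_eq_moment_pairing Phi_gf_def field_simps)

lemma Phi_star_gf_0: "Phi_star_gf a 0 = Phi_gf a 0"
  by (simp add: Phi_gf_def Phi_star_gf_def)

lemma nth_Phi_gf_below: "i < m \<Longrightarrow> Phi_gf a m $ i = 0"
  by (simp add: Phi_gf_def moment_pairing_Phi_eq_0)

lemma Phi_gf_Suc:
  "Phi_gf a (Suc m) =
     fps_X * Phi_gf a m - fps_const (cnj (a m)) * (Phi_star_gf a m - fps_const (Phi_sqnorm a m))"
proof (rule fps_ext)
  fix n
  show "Phi_gf a (Suc m) $ n =
      (fps_X * Phi_gf a m - fps_const (cnj (a m)) * (Phi_star_gf a m - fps_const (Phi_sqnorm a m))) $ n"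
  proof (cases n)
    case 0
    have "moment_pairing (szego_moments a) (Phi a (Suc m)) 0 = 0"
      by (rule moment_pairing_Phi_eq_0) auto
    then show ?thesis
      using 0 cnj_Phi_sqnorm[of a m]
      by (simp add: Phi_gf_def Phi_star_gf_def moment_pairing_poly_star_Phi Phi_sqnorm_def)
  next
    case (Suc i)
    then show ?thesis
      by (simp add: Phi_gf_def Phi_star_gf_def moment_pairing_Phi_Suc)
  qed
qed

lemma Phi_star_gf_Suc:
  "Phi_star_gf a (Suc m) =
     Phi_star_gf a m - fps_const (a m) * (fps_X * Phi_gf a m) - fps_const (a m * cnj (a m) * Phi_sqnorm a m)"
proof (rule fps_ext)
  fix n
  have step: "moment_pairing (szego_moments a) (poly_star (Phi a (Suc m))) k =
      moment_pairing (szego_moments a) (poly_star (Phi a m)) k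
      - a m * moment_pairing (szego_moments a) (Phi a m) (k - 1)" for k
    by (simp add: moment_pairing_poly_star_Phi moment_pairing_Phi_Suc algebra_simps)
  show "Phi_star_gf a (Suc m) $ n = (Phi_star_gf a m - fps_const (a m) * (fps_X * Phi_gf a m)
      - fps_const (a m * cnj (a m) * Phi_sqnorm a m)) $ n"
    by (cases n) (simp_all add: Phi_gf_def Phi_star_gf_def step moment_pairing_Phi_minus_1)
qed

text \<open>If \<open>p\<close> were the order of \<open>D\<^sub>0\<close>, then all \<open>D\<^sub>m\<close>, \<open>E\<^sub>m\<close> vanish below \<open>p\<close> and \<open>E\<^sub>m $ p = D\<^sub>0 $ p\<close>,
  so \<open>D\<^sub>p\<^sub>+\<^sub>1 $ p = - b\<^sub>p D\<^sub>0 $ p \<noteq> 0\<close>.\<close>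
lemma fps_coupled_recurrence_eq_0:
  fixes D E :: "nat \<Rightarrow> 'a::idom fps"
  assumes D_Suc: "\<And>m. D (Suc m) = fps_X * D m - fps_const (b m) * E m"
    and E_Suc: "\<And>m. E (Suc m) = E m - fps_const (c m) * (fps_X * D m)"
    and DE_0: "D 0 = E 0"
    and D_below: "\<And>m i. i < m \<Longrightarrow> D m $ i = 0"
    and b: "\<And>m. b m \<noteq> 0"
  shows "D m = 0 \<and> E m = 0"
proof -
  have "D 0 = 0"
  proof (rule ccontr)
    assume "D 0 \<noteq> 0"
    define p where "p = subdegree (D 0)"
    have "D 0 $ p \<noteq> 0"
      using \<open>D 0 \<noteq> 0\<close> by (simp add: p_def)
    have "(\<forall>i<p. D m $ i = 0 \<and> E m $ i = 0) \<and> E m $ p = D 0 $ p" for m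
    proof (induction m)
      case 0
      then show ?case
        using DE_0 by (auto simp: p_def)
    next
      case (Suc m)
      have "(fps_X * D m) $ i = 0" if "i \<le> p" for i
        using Suc that by (cases i) auto
      then show ?case
        using Suc by (auto simp: D_Suc E_Suc)
    qed
    then have "D (Suc p) $ p = - b p * D 0 $ p"
      by (simp add: D_Suc)
    moreover have "D (Suc p) $ p = 0"
      by (rule D_below) simp
    ultimately show False
      using b \<open>D 0 $ p \<noteq> 0\<close> by simp
  qed
  then show ?thesis
    by (induction m) (simp_all add: D_Suc E_Suc flip: DE_0)
qed

lemma Phi_gf_unique:
  assumes a: "\<And>m. a m \<noteq> 0"
    and G_Suc: "\<And>m. G (Suc m) =
      fps_X * G m - fps_const (cnj (a m)) * (H m - fps_const (Phi_sqnorm a m))"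
    and H_Suc: "\<And>m. H (Suc m) =
      H m - fps_const (a m) * (fps_X * G m) - fps_const (a m * cnj (a m) * Phi_sqnorm a m)"
    and GH_0: "G 0 = H 0"
    and G_below: "\<And>m i. i < m \<Longrightarrow> G m $ i = 0"
  shows "Phi_gf a m = G m"
proof -
  have "G m - Phi_gf a m = 0 \<and> H m - Phi_star_gf a m = 0"
  proof (rule fps_coupled_recurrence_eq_0[where b = "\<lambda>m. cnj (a m)" and c = a])
    show "G (Suc m) - Phi_gf a (Suc m) =
        fps_X * (G m - Phi_gf a m) - fps_const (cnj (a m)) * (H m - Phi_star_gf a m)" for m
      by (simp add: G_Suc Phi_gf_Suc algebra_simps)
    show "H (Suc m) - Phi_star_gf a (Suc m) =
        H m - Phi_star_gf a m - fps_const (a m) * (fps_X * (G m - Phi_gf a m))" for m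
      by (simp add: H_Suc Phi_star_gf_Suc algebra_simps)
    show "G 0 - Phi_gf a 0 = H 0 - Phi_star_gf a 0"
      by (simp add: GH_0 Phi_star_gf_0)
    show "(G m - Phi_gf a m) $ i = 0" if "i < m" for m i
      using that by (simp add: G_below nth_Phi_gf_below)
    show "cnj (a m) \<noteq> 0" for m
      using a by simp
  qed
  then show ?thesis by simp
qed

section \<open>Constant Verblunsky coefficients\<close>

lemma Phi_sqnorm_const: "Phi_sqnorm (\<lambda>_. \<alpha>) m = (1 - \<alpha> * cnj \<alpha>) ^ m"
  by (induction m) (simp_all add: Phi_sqnorm_Suc)

lemma Phi_gf_const_ansatz:
  fixes \<alpha> :: complex and g h :: "complex fps"
  defines "R \<equiv> fps_const (\<alpha> * cnj \<alpha>)" and "l \<equiv> fps_X * h"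
  assumes "\<alpha> \<noteq> 0"
    and G_step: "(1 - R) * g * l = fps_X * g - fps_const (cnj \<alpha>) * (g - 1)"
    and H_step: "(1 - R) * (g - 1) * l = (g - 1) - fps_const \<alpha> * fps_X * g"
  shows "Phi_gf (\<lambda>_. \<alpha>) m = fps_const ((1 - \<alpha> * cnj \<alpha>) ^ m) * g * l ^ m"
proof -
  define N where "N m = fps_const ((1 - \<alpha> * cnj \<alpha>) ^ m)" for m
  have "1 - R = fps_const (1 - \<alpha> * cnj \<alpha>)"
    by (simp add: R_def fps_eq_iff)
  then have N_Suc: "N (Suc m) = (1 - R) * N m" for m
    by (simp add: N_def)
  have N_eq: "fps_const (Phi_sqnorm (\<lambda>_. \<alpha>) m) = N m"
       "fps_const (\<alpha> * cnj \<alpha> * Phi_sqnorm (\<lambda>_. \<alpha>) m) = R * N m" for m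
    by (simp_all add: Phi_sqnorm_const N_def R_def)
  have "Phi_gf (\<lambda>_. \<alpha>) m = N m * g * l ^ m"
  proof (rule Phi_gf_unique[where H = "\<lambda>m. N m * (1 + (g - 1) * l ^ m)"])
    show "N (Suc m) * g * l ^ Suc m =
        fps_X * (N m * g * l ^ m) - fps_const (cnj \<alpha>) *
          (N m * (1 + (g - 1) * l ^ m) - fps_const (Phi_sqnorm (\<lambda>_. \<alpha>) m))" for m
    proof -
      have "N (Suc m) * g * l ^ Suc m = N m * l ^ m * ((1 - R) * g * l)"
        by (simp add: N_Suc mult_ac)
      then show ?thesis
        by (simp only: G_step N_eq) (simp add: algebra_simps)
    qed
    show "N (Suc m) * (1 + (g - 1) * l ^ Suc m) =
        N m * (1 + (g - 1) * l ^ m) - fps_const \<alpha> * (fps_X * (N m * g * l ^ m)) -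
          fps_const (\<alpha> * cnj \<alpha> * Phi_sqnorm (\<lambda>_. \<alpha>) m)" for m
    proof -
      have "N (Suc m) * (1 + (g - 1) * l ^ Suc m) = (1 - R) * N m + N m * l ^ m * ((1 - R) * (g - 1) * l)"
        by (simp add: N_Suc algebra_simps)
      then show ?thesis
        by (simp only: H_step N_eq) (simp add: algebra_simps)
    qed
    show "(N m * g * l ^ m) $ i = 0" if "i < m" for m i
    proof -
      have "N m * g * l ^ m = fps_X ^ m * (N m * g * h ^ m)"
        by (simp add: l_def power_mult_distrib mult_ac)
      then show ?thesis
        using that by (simp only: fps_X_power_mult_nth if_True)
    qed
  qed (use \<open>\<alpha> \<noteq> 0\<close> in \<open>simp_all add: N_def\<close>)
  then show ?thesis
    by (simp add: N_def)
qed

lemma Geronimus_identities: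
  fixes X S A B R iu iD :: "'a::{idom,semiring_char_0}"
  assumes "S ^ 2 = 1 - 2 * X + 4 * R * X + X ^ 2" "(1 + X + S) * iu = 1"
    and "(2 * R + A - A * X - A * S) * iD = 1" "A * B = R"
  shows "(1 - R) * (2 * R * iD) * (X * (2 * iu)) = X * (2 * R * iD) - B * (2 * R * iD - 1)"
    and "(1 - R) * (2 * R * iD - 1) * (X * (2 * iu)) = (2 * R * iD - 1) - A * X * (2 * R * iD)"
  using assms by algebra+

lemma Geronimus_Phi_gf:
  fixes \<alpha> r :: complex and S :: "complex fps"
  defines "D \<equiv> fps_const (2 * r + \<alpha>) - fps_const \<alpha> * fps_X - fps_const \<alpha> * S"
    and "u \<equiv> 1 + fps_X + S"
  assumes r: "\<alpha> * cnj \<alpha> = r" and "\<alpha> \<noteq> 0" and S0: "S $ 0 = 1"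
    and S2: "S ^ 2 = 1 - 2 * fps_X + 4 * fps_const r * fps_X + fps_X ^ 2"
  shows "Phi_gf (\<lambda>_. \<alpha>) m =
    fps_const ((1 - r) ^ m) * (2 * fps_const r * inverse D) * (fps_X * (2 * inverse u)) ^ m"
proof -
  have D_eq: "D = 2 * fps_const r + fps_const \<alpha> - fps_const \<alpha> * fps_X - fps_const \<alpha> * S"
    by (simp add: D_def numeral_fps_const)
  have "(2 * fps_const r + fps_const \<alpha> - fps_const \<alpha> * fps_X - fps_const \<alpha> * S) * inverse D = 1"
    unfolding D_eq[symmetric] using S0 \<open>\<alpha> \<noteq> 0\<close>
    by (simp add: D_def inverse_mult_eq_1' flip: r)
  moreover have "(1 + fps_X + S) * inverse u = 1"
    unfolding u_def using S0 by (simp add: inverse_mult_eq_1')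
  moreover have "fps_const \<alpha> * fps_const (cnj \<alpha>) = fps_const r"
    by (simp add: r)
  ultimately show ?thesis
    using \<open>\<alpha> \<noteq> 0\<close> Geronimus_identities[OF S2] by (intro Phi_gf_const_ansatz[where \<alpha> = \<alpha>, unfolded r])
qed

lemma
  fixes Q :: "complex fps"
  assumes "Q $ 0 = 1"
  shows fps_sqrt1_nth_0: "fps_sqrt1 Q $ 0 = 1"
    and fps_sqrt1_square: "fps_sqrt1 Q ^ 2 = Q"
proof -
  define T where "T = fps_radical (\<lambda>_ _. 1) 2 Q"
  have T0: "T $ 0 = 1"
    by (simp add: T_def)
  have T2: "T ^ 2 = Q"
    using power_radical[of Q "\<lambda>_ _. 1" 1] assms by (simp add: T_def numeral_2_eq_2)
  have "S = T" if "S $ 0 = 1" "S ^ 2 = Q" for S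
  proof -
    have "(S - T) * (S + T) = 0"
      using that T2 by (simp add: algebra_simps power2_eq_square)
    moreover have "S + T \<noteq> 0"
    proof
      assume "S + T = 0"
      then have "(S + T) $ 0 = 0" by simp
      then show False
        using that T0 by simp
    qed
    ultimately show ?thesis
      by simp
  qed
  then have "fps_sqrt1 Q = T"
    unfolding fps_sqrt1_def using T0 T2 by blast
  then show "fps_sqrt1 Q $ 0 = 1" "fps_sqrt1 Q ^ 2 = Q"
    using T0 T2 by simp_all
qed

theorem proposition4p1:
  fixes \<alpha> :: complex and m :: nat
  assumes "0 < cmod \<alpha>" and "cmod \<alpha> < 1"
  shows "Abs_fps (\<lambda>n. mu (\<lambda>_. \<alpha>) n m) =
    (let r = complex_of_real ((cmod \<alpha>)\<^sup>2);
         S = fps_sqrt1 (1 - fps_const 2 * fps_X + fps_const (4 * r) * fps_X + fps_X ^ 2)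
     in fps_const (2 * r) * (fps_const 2 * fps_X) ^ m /
        ((fps_const (2 * r + \<alpha>) - fps_const \<alpha> * fps_X - fps_const \<alpha> * S) *
         (1 + fps_X + S) ^ m))"
proof -
  define r where "r = \<alpha> * cnj \<alpha>"
  define S where "S = fps_sqrt1 (1 - fps_const 2 * fps_X + fps_const (4 * r) * fps_X + fps_X ^ 2)"
  define D where "D = fps_const (2 * r + \<alpha>) - fps_const \<alpha> * fps_X - fps_const \<alpha> * S"
  define u :: "complex fps" where "u = 1 + fps_X + S"
  have r: "complex_of_real ((cmod \<alpha>)\<^sup>2) = r"
    unfolding r_def by (rule complex_norm_square)
  have "(cmod \<alpha>)\<^sup>2 \<noteq> 0" "(cmod \<alpha>)\<^sup>2 \<noteq> 1"
    using assms by (simp_all add: abs_square_eq_1)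
  then have "r \<noteq> 0" "r \<noteq> 1"
    by (simp_all flip: r del: of_real_power)
  have S0: "S $ 0 = 1" and S2: "S ^ 2 = 1 - 2 * fps_X + 4 * fps_const r * fps_X + fps_X ^ 2"
    unfolding S_def by (simp_all add: fps_sqrt1_nth_0 fps_sqrt1_square numeral_fps_const)
  have "Abs_fps (\<lambda>n. mu (\<lambda>_. \<alpha>) n m) = 2 * fps_const r * inverse D * (fps_X * (2 * inverse u)) ^ m"
    using Geronimus_Phi_gf[OF r_def[symmetric] _ S0 S2, of m, folded D_def u_def] assms \<open>r \<noteq> 1\<close>
    by (simp add: mu_gf Phi_sqnorm_const flip: r_def)
  also have "\<dots> = fps_const (2 * r) * (fps_const 2 * fps_X) ^ m / (D * u ^ m)"
    using S0 \<open>r \<noteq> 0\<close> by (simp add: D_def u_def fps_divide_unit fps_inverse_mult fps_inverse_power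
        fps_nth_power_0 numeral_fps_const power_mult_distrib mult_ac)
  finally show ?thesis
    by (simp only: Let_def r S_def D_def u_def)
qed

end
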